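(* Let $R$ be a commutative ring, $M$ a locally free $R$-module of rank 2, $N$ a locally free $R$-module of rank 1, and $q:M\to N$ a quadratic map (in the sense of Kneser) with corresponding element $f\in\mathrm{Sym}^2M^*\otimes N$. Then $q$ is primitive in the sense of Kneser if and only if the linear binary quadratic form $f$ is primitive.
   Context: A quadratic map $q:M\to N$ is a map of sets with $q(rm)=r^2q(m)$ for $r\in R$, $m\in M$, such that $B(x,y)=q(x+y)-q(x)-q(y)$ is $R$-bilinear. It is primitive (Kneser) if $q(M)$ generates $N$ as an $R$-module. The corresponding $f\in\mathrm{Sym}^2M^*\otimes N\cong\mathrm{Hom}_R(\mathrm{Sym}_2M,N)$ (where $\mathrm{Sym}_2M\subset M^{\otimes2}$ is the submodule of symmetric tensors) is the homomorphism determined, on each open where $M$ is free with basis $m_1,m_2$, by $m_i\otimes m_i\mapsto q(m_i)$ and $m_1\otimes m_2+m_2\otimes m_1\mapsto B(m_1,m_2)$; equivalently $q(m)$ is the value of $f$ on $m\otimes m$. A linear binary quadratic form $f\in\mathrm{Sym}^2V\otimes L$ ($V$ locally free of rank 2, $L$ locally free of rank 1) is primitive if on every open where $V$ has basis $x,y$ and $L$ has basis $z$, writing $f=ax^2z+bxyz+cy^2z$, the elements $a,b,c$ generate the unit ideal; here $V=M^*$, $L=N$. *)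

theory Defs
  imports Main "HOL.Modules"
begin

text \<open>Localization at an element s of R is written out elementwise:
x/1 = y/1 in M_s iff s^n (x - y) = 0 for some n.\<close>

definition loc_eq :: "('r::comm_ring_1 \<Rightarrow> 'm::ab_group_add \<Rightarrow> 'm) \<Rightarrow> 'r \<Rightarrow> 'm \<Rightarrow> 'm \<Rightarrow> bool" where
  "loc_eq sc s x y \<longleftrightarrow> (\<exists>n::nat. sc (s ^ n) (x - y) = 0)"

text \<open>m1/1, m2/1 form a basis of the localized module M_s (free of rank 2).\<close>
definition loc_basis2 :: "('r::comm_ring_1 \<Rightarrow> 'm::ab_group_add \<Rightarrow> 'm) \<Rightarrow> 'r \<Rightarrow> 'm \<Rightarrow> 'm \<Rightarrow> bool" where
  "loc_basis2 sc s m1 m2 \<longleftrightarrow>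
     (\<forall>m. \<exists>(n::nat) a b. sc (s ^ n) m = sc a m1 + sc b m2) \<and>
     (\<forall>a b. sc a m1 + sc b m2 = 0 \<longrightarrow> (\<exists>n::nat. s ^ n * a = 0 \<and> s ^ n * b = 0))"

text \<open>z/1 forms a basis of the localized module N_s (free of rank 1).\<close>
definition loc_basis1 :: "('r::comm_ring_1 \<Rightarrow> 'm::ab_group_add \<Rightarrow> 'm) \<Rightarrow> 'r \<Rightarrow> 'm \<Rightarrow> bool" where
  "loc_basis1 sc s z \<longleftrightarrow>
     (\<forall>m. \<exists>(n::nat) a. sc (s ^ n) m = sc a z) \<and>
     (\<forall>a. sc a z = 0 \<longrightarrow> (\<exists>n::nat. s ^ n * a = 0))"

definition locally_free_rank2 :: "('r::comm_ring_1 \<Rightarrow> 'm::ab_group_add \<Rightarrow> 'm) \<Rightarrow> bool" where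
  "locally_free_rank2 sc \<longleftrightarrow> (\<exists>S. finite S \<and> module.span ((*) :: 'r \<Rightarrow> 'r \<Rightarrow> 'r) S = UNIV \<and>
      (\<forall>s\<in>S. \<exists>m1 m2. loc_basis2 sc s m1 m2))"

definition locally_free_rank1 :: "('r::comm_ring_1 \<Rightarrow> 'm::ab_group_add \<Rightarrow> 'm) \<Rightarrow> bool" where
  "locally_free_rank1 sc \<longleftrightarrow> (\<exists>S. finite S \<and> module.span ((*) :: 'r \<Rightarrow> 'r \<Rightarrow> 'r) S = UNIV \<and>
      (\<forall>s\<in>S. \<exists>z. loc_basis1 sc s z))"

definition polar :: "('m::ab_group_add \<Rightarrow> 'n::ab_group_add) \<Rightarrow> 'm \<Rightarrow> 'm \<Rightarrow> 'n" where
  "polar q x y = q (x + y) - q x - q y"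

definition quadratic_map ::
  "('r::comm_ring_1 \<Rightarrow> 'm::ab_group_add \<Rightarrow> 'm) \<Rightarrow> ('r \<Rightarrow> 'n::ab_group_add \<Rightarrow> 'n) \<Rightarrow> ('m \<Rightarrow> 'n) \<Rightarrow> bool" where
  "quadratic_map sM sN q \<longleftrightarrow>
     (\<forall>r m. q (sM r m) = sN (r ^ 2) (q m)) \<and>
     (\<forall>x y z. polar q (x + y) z = polar q x z + polar q y z) \<and>
     (\<forall>x y z. polar q x (y + z) = polar q x y + polar q x z) \<and>
     (\<forall>r x y. polar q (sM r x) y = sN r (polar q x y)) \<and>
     (\<forall>r x y. polar q x (sM r y) = sN r (polar q x y))"

definition kneser_primitive :: "('r::comm_ring_1 \<Rightarrow> 'n::ab_group_add \<Rightarrow> 'n) \<Rightarrow> ('m \<Rightarrow> 'n) \<Rightarrow> bool" where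
  "kneser_primitive sN q \<longleftrightarrow> module.span sN (range q) = UNIV"

text \<open>On the basic open D(s), if m1,m2 is a basis of M_s (dual basis x,y of M^*_s) and z is a
basis of N_s, then f = a x^2 z + b x y z + c y^2 z with a z = f(m1 (x) m1) = q(m1),
b z = f(m1 (x) m2 + m2 (x) m1) = B(m1,m2), c z = f(m2 (x) m2) = q(m2) in N_s.
Writing a = a'/s^t etc. (a',b',c' in R), the ideal (a,b,c) of R_s is the unit ideal iff
some power of s lies in the ideal (a',b',c') of R.\<close>
definition linear_form_primitive ::
  "('r::comm_ring_1 \<Rightarrow> 'm::ab_group_add \<Rightarrow> 'm) \<Rightarrow> ('r \<Rightarrow> 'n::ab_group_add \<Rightarrow> 'n) \<Rightarrow> ('m \<Rightarrow> 'n) \<Rightarrow> bool" where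
  "linear_form_primitive sM sN q \<longleftrightarrow>
     (\<forall>s m1 m2 z a b c (t::nat).
        loc_basis2 sM s m1 m2 \<and> loc_basis1 sN s z \<and>
        loc_eq sN s (sN (s ^ t) (q m1)) (sN a z) \<and>
        loc_eq sN s (sN (s ^ t) (polar q m1 m2)) (sN b z) \<and>
        loc_eq sN s (sN (s ^ t) (q m2)) (sN c z)
        \<longrightarrow> (\<exists>(n::nat) u v w. s ^ n = u * a + v * b + w * c))"

end

theory Submission
  imports Defs
begin

text \<open>Both primitivity notions are local. On a basic open \<open>D(s)\<close> where \<open>M\<close> has basis \<open>m1, m2\<close> and
  \<open>N\<close> has basis \<open>z\<close>, the identity \<open>q(A m1 + B m2) = (A\<^sup>2 a + A B b + B\<^sup>2 c) z\<close> shows that, up to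
  powers of \<open>s\<close>, the submodule generated by \<open>q(M)\<close> is \<open>(a, b, c) z\<close>. Hence \<open>q(M)\<close> generating \<open>N\<close>
  forces a power of \<open>s\<close> into \<open>(a, b, c)\<close>; conversely, if every such ideal contains a power of \<open>s\<close>,
  then for each \<open>y \<in> N\<close> the ideal \<open>{r. r y \<in> \<langle>q(M)\<rangle>}\<close> contains a power of every product of
  trivialising elements of \<open>M\<close> and \<open>N\<close>. These products generate the unit ideal, so that ideal
  contains \<open>1\<close>.\<close>

interpretation ideal: module "(*) :: 'r::comm_ring_1 \<Rightarrow> 'r \<Rightarrow> 'r"
  by unfold_locales (auto simp: algebra_simps)

declare ideal.scale_scale [simp del] \<comment> \<open>it would loop against \<open>mult.assoc\<close>\<close>

lemma ideal_span_three_iff: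
  "x \<in> ideal.span {a, b, c} \<longleftrightarrow> (\<exists>u v w. x = u * a + v * b + w * (c::'r::comm_ring_1))"
  by (auto simp: ideal.span_insert ideal.span_singleton algebra_simps)

lemma ideal_power_add_mem:
  fixes a b :: "'r::comm_ring_1"
  assumes I: "ideal.subspace I" and a: "a ^ i \<in> I" and b: "b ^ j \<in> I"
  shows "(a + b) ^ (i + j) \<in> I"
proof -
  have "of_nat (i + j choose k) * a ^ k * b ^ (i + j - k) \<in> I" for k
  proof (cases "i \<le> k")
    case True
    then have "a ^ k = a ^ (k - i) * a ^ i" by (simp flip: power_add)
    then have "of_nat (i + j choose k) * a ^ k * b ^ (i + j - k)
        = (of_nat (i + j choose k) * a ^ (k - i) * b ^ (i + j - k)) * a ^ i"
      by (simp add: ac_simps)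
    then show ?thesis using ideal.subspace_scale[OF I a] by metis
  next
    case False
    then have "b ^ (i + j - k) = b ^ (i - k) * b ^ j" by (simp flip: power_add)
    then have "of_nat (i + j choose k) * a ^ k * b ^ (i + j - k)
        = (of_nat (i + j choose k) * a ^ k * b ^ (i - k)) * b ^ j"
      by (simp add: ac_simps)
    then show ?thesis using ideal.subspace_scale[OF I b] by metis
  qed
  then show ?thesis
    unfolding binomial_ring by (intro ideal.subspace_sum[OF I])
qed

lemma ideal_subspace_radical:
  assumes I: "ideal.subspace (I :: 'r::comm_ring_1 set)"
  shows "ideal.subspace {x. \<exists>k. x ^ k \<in> I}"
proof (rule ideal.subspaceI)
  show "0 \<in> {x. \<exists>k. x ^ k \<in> I}"
    using ideal.subspace_0[OF I] by (intro CollectI exI[of _ 1]) simp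
  show "x + y \<in> {x. \<exists>k. x ^ k \<in> I}" if "x \<in> {x. \<exists>k. x ^ k \<in> I}" "y \<in> {x. \<exists>k. x ^ k \<in> I}" for x y
    using that ideal_power_add_mem[OF I] by blast
  show "c * x \<in> {x. \<exists>k. x ^ k \<in> I}" if "x \<in> {x. \<exists>k. x ^ k \<in> I}" for c x
    using that ideal.subspace_scale[OF I, of _ "c ^ _"] by (auto simp: power_mult_distrib)
qed

lemma one_mem_ideal_if_powers_of_generators:
  fixes U :: "'r::comm_ring_1 set"
  assumes I: "ideal.subspace I" and U: "ideal.span U = UNIV"
    and powers: "\<And>u. u \<in> U \<Longrightarrow> \<exists>k. u ^ k \<in> I"
  shows "1 \<in> I"
proof -
  have "(1::'r) \<in> {x. \<exists>k. x ^ k \<in> I}"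
    using ideal.span_subspace_induct[OF _ ideal_subspace_radical[OF I], of 1 U] U powers by auto
  then show ?thesis by simp
qed

lemma ideal_span_products_eq_UNIV:
  fixes U V :: "'r::comm_ring_1 set"
  assumes U: "ideal.span U = UNIV" and V: "ideal.span V = UNIV"
  shows "ideal.span {u * v | u v. u \<in> U \<and> v \<in> V} = UNIV" (is "ideal.span ?P = _")
proof -
  have "u \<in> ideal.span ?P" if u: "u \<in> U" for u
  proof -
    have sub: "ideal.subspace {x. u * x \<in> ideal.span ?P}"
    proof (rule ideal.subspaceI)
      show "0 \<in> {x. u * x \<in> ideal.span ?P}" by (simp add: ideal.span_zero)
      show "x + y \<in> {x. u * x \<in> ideal.span ?P}"
        if "x \<in> {x. u * x \<in> ideal.span ?P}" "y \<in> {x. u * x \<in> ideal.span ?P}" for x y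
        using that ideal.span_add by (simp add: distrib_left)
      show "c * x \<in> {x. u * x \<in> ideal.span ?P}" if "x \<in> {x. u * x \<in> ideal.span ?P}" for c x
        using that ideal.span_scale[of "u * x" _ c] by (simp add: mult.left_commute)
    qed
    have "V \<subseteq> {x. u * x \<in> ideal.span ?P}"
      using u by (auto intro: ideal.span_base)
    then have "1 \<in> {x. u * x \<in> ideal.span ?P}"
      using ideal.span_minimal[OF _ sub] V by blast
    then show ?thesis by simp
  qed
  then show ?thesis
    using ideal.span_minimal[of U "ideal.span ?P"] U by auto
qed

context module
begin

lemma loc_eq_refl: "loc_eq scale s x x"
  unfolding loc_eq_def by (rule exI[of _ 0]) simp

lemma loc_eq_add:
  assumes "loc_eq scale s x1 y1" "loc_eq scale s x2 y2"
  shows "loc_eq scale s (x1 + x2) (y1 + y2)"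
proof -
  obtain n1 n2 where n1: "scale (s ^ n1) (x1 - y1) = 0" and n2: "scale (s ^ n2) (x2 - y2) = 0"
    using assms unfolding loc_eq_def by blast
  have "scale (s ^ (n1 + n2)) ((x1 + x2) - (y1 + y2))
      = scale (s ^ n2) (scale (s ^ n1) (x1 - y1)) + scale (s ^ n1) (scale (s ^ n2) (x2 - y2))"
    by (simp add: power_add algebra_simps)
  then show ?thesis unfolding loc_eq_def using n1 n2 by (metis add_0 scale_zero_right)
qed

lemma loc_eq_scale:
  assumes "loc_eq scale s x y"
  shows "loc_eq scale s (scale r x) (scale r y)"
proof -
  obtain n where n: "scale (s ^ n) (x - y) = 0" using assms unfolding loc_eq_def by blast
  have "scale (s ^ n) (scale r x - scale r y) = scale r (scale (s ^ n) (x - y))"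
    by (simp add: algebra_simps)
  then show ?thesis unfolding loc_eq_def using n by auto
qed

lemma loc_basis2_mult:
  assumes "loc_basis2 scale s m1 m2"
  shows "loc_basis2 scale (s * u) m1 m2"
  unfolding loc_basis2_def
proof safe
  fix m
  obtain n a b where "scale (s ^ n) m = scale a m1 + scale b m2"
    using assms unfolding loc_basis2_def by blast
  then have "scale ((s * u) ^ n) m = scale (u ^ n * a) m1 + scale (u ^ n * b) m2"
    by (metis power_mult_distrib scale_right_distrib scale_scale mult.commute)
  then show "\<exists>n a b. scale ((s * u) ^ n) m = scale a m1 + scale b m2" by blast
next
  fix a b assume "scale a m1 + scale b m2 = 0"
  then obtain n where "s ^ n * a = 0" "s ^ n * b = 0"
    using assms unfolding loc_basis2_def by blast
  moreover have "(s * u) ^ n * r = u ^ n * (s ^ n * r)" for r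
    by (simp add: power_mult_distrib ac_simps)
  ultimately have "(s * u) ^ n * a = 0 \<and> (s * u) ^ n * b = 0"
    by simp
  then show "\<exists>n. (s * u) ^ n * a = 0 \<and> (s * u) ^ n * b = 0" by blast
qed

lemma loc_basis1_mult:
  assumes "loc_basis1 scale s z"
  shows "loc_basis1 scale (s * u) z"
  unfolding loc_basis1_def
proof safe
  fix m
  obtain n a where "scale (s ^ n) m = scale a z" using assms unfolding loc_basis1_def by blast
  then have "scale ((s * u) ^ n) m = scale (u ^ n * a) z"
    by (metis power_mult_distrib scale_scale mult.commute)
  then show "\<exists>n a. scale ((s * u) ^ n) m = scale a z" by blast
next
  fix a assume "scale a z = 0"
  then obtain n where "s ^ n * a = 0" using assms unfolding loc_basis1_def by blast
  moreover have "(s * u) ^ n * a = u ^ n * (s ^ n * a)"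
    by (simp add: power_mult_distrib ac_simps)
  ultimately have "(s * u) ^ n * a = 0" by simp
  then show "\<exists>n. (s * u) ^ n * a = 0" by blast
qed

lemma loc_basis1_cancel:
  assumes z: "loc_basis1 scale s z" and eq: "loc_eq scale s (scale a z) (scale b z)"
  shows "\<exists>n. s ^ n * a = s ^ n * b"
proof -
  obtain p where "scale (s ^ p) (scale a z - scale b z) = 0" using eq unfolding loc_eq_def by blast
  then have "scale (s ^ p * (a - b)) z = 0" by (simp add: algebra_simps)
  then obtain n where "s ^ n * (s ^ p * (a - b)) = 0" using z unfolding loc_basis1_def by blast
  then have "s ^ (n + p) * a = s ^ (n + p) * b" by (simp add: algebra_simps power_add)
  then show ?thesis by blast
qed

lemma subspace_loc_multiples:
  assumes I: "ideal.subspace I"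
  shows "subspace {y. \<exists>k. \<exists>e\<in>I. loc_eq scale s (scale (s ^ k) y) (scale e z)}"
proof (rule subspaceI)
  show "0 \<in> {y. \<exists>k. \<exists>e\<in>I. loc_eq scale s (scale (s ^ k) y) (scale e z)}"
    using ideal.subspace_0[OF I] loc_eq_refl by force
next
  fix x y
  assume "x \<in> {y. \<exists>k. \<exists>e\<in>I. loc_eq scale s (scale (s ^ k) y) (scale e z)}"
    and "y \<in> {y. \<exists>k. \<exists>e\<in>I. loc_eq scale s (scale (s ^ k) y) (scale e z)}"
  then obtain k1 e1 k2 e2 where e: "e1 \<in> I" "e2 \<in> I"
    and x: "loc_eq scale s (scale (s ^ k1) x) (scale e1 z)"
    and y: "loc_eq scale s (scale (s ^ k2) y) (scale e2 z)"
    by blast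
  have "loc_eq scale s (scale (s ^ k2) (scale (s ^ k1) x) + scale (s ^ k1) (scale (s ^ k2) y))
      (scale (s ^ k2) (scale e1 z) + scale (s ^ k1) (scale e2 z))"
    by (intro loc_eq_add loc_eq_scale x y)
  then have "loc_eq scale s (scale (s ^ (k1 + k2)) (x + y)) (scale (s ^ k2 * e1 + s ^ k1 * e2) z)"
    by (simp add: algebra_simps power_add)
  moreover have "s ^ k2 * e1 + s ^ k1 * e2 \<in> I"
    using e I by (simp add: ideal.subspace_add ideal.subspace_scale)
  ultimately show "x + y \<in> {y. \<exists>k. \<exists>e\<in>I. loc_eq scale s (scale (s ^ k) y) (scale e z)}"
    by blast
next
  fix c x
  assume "x \<in> {y. \<exists>k. \<exists>e\<in>I. loc_eq scale s (scale (s ^ k) y) (scale e z)}"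
  then obtain k e where e: "e \<in> I" and x: "loc_eq scale s (scale (s ^ k) x) (scale e z)"
    by blast
  have "loc_eq scale s (scale (s ^ k) (scale c x)) (scale (c * e) z)"
    using loc_eq_scale[OF x, of c] by (simp add: mult.commute)
  moreover have "c * e \<in> I" using ideal.subspace_scale[OF I e] .
  ultimately show "scale c x \<in> {y. \<exists>k. \<exists>e\<in>I. loc_eq scale s (scale (s ^ k) y) (scale e z)}"
    by blast
qed

lemma ideal_subspace_conductor:
  assumes "subspace T"
  shows "ideal.subspace {r. scale r y \<in> T}"
  using assms by (intro ideal.subspaceI) (auto simp: subspace_def scale_left_distrib simp flip: scale_scale)

lemma polar_mem_span: "polar q x y \<in> span (range q)"
  unfolding polar_def by (intro span_diff span_base) auto

lemma loc_basis1_power_scale_mem: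
  assumes z: "loc_basis1 scale w z" and T: "subspace T" and n: "scale (w ^ n) z \<in> T"
  shows "\<exists>k. scale (w ^ k) y \<in> T"
proof -
  obtain k d where "scale (w ^ k) y = scale d z" using z unfolding loc_basis1_def by blast
  then have "scale (w ^ (k + n)) y = scale d (scale (w ^ n) z)"
    by (metis scale_scale power_add mult.commute)
  then show ?thesis using subspace_scale[OF T n] by metis
qed

end

lemma quadratic_map_expand:
  assumes "module sN" "quadratic_map sM sN q"
  shows "q (sM A m1 + sM B m2) = sN (A ^ 2) (q m1) + sN (A * B) (polar q m1 m2) + sN (B ^ 2) (q m2)"
proof -
  interpret N: module sN by fact
  have Q: "\<And>r m. q (sM r m) = sN (r ^ 2) (q m)"
    and P1: "\<And>r x y. polar q (sM r x) y = sN r (polar q x y)"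
    and P2: "\<And>r x y. polar q x (sM r y) = sN r (polar q x y)"
    using assms(2) unfolding quadratic_map_def by auto
  have "q (sM A m1 + sM B m2) = q (sM A m1) + q (sM B m2) + polar q (sM A m1) (sM B m2)"
    by (simp add: polar_def)
  also have "polar q (sM A m1) (sM B m2) = sN (A * B) (polar q m1 m2)"
    by (simp add: P1 P2 mult.commute)
  finally show ?thesis by (simp add: Q algebra_simps)
qed

text \<open>Expand \<open>s\<^sup>n w = A m1 + B m2\<close> with \<open>quadratic_map_expand\<close>.\<close>
lemma quadratic_map_loc_value:
  assumes N: "module sN" and q: "quadratic_map sM sN q"
    and m: "loc_basis2 sM s m1 m2"
    and ea: "loc_eq sN s (sN (s ^ t) (q m1)) (sN a z)"
    and eb: "loc_eq sN s (sN (s ^ t) (polar q m1 m2)) (sN b z)"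
    and ec: "loc_eq sN s (sN (s ^ t) (q m2)) (sN c z)"
  shows "\<exists>k. \<exists>e\<in>ideal.span {a, b, c}. loc_eq sN s (sN (s ^ k) (q w)) (sN e z)"
proof -
  interpret N: module sN by fact
  obtain n A B where nAB: "sM (s ^ n) w = sM A m1 + sM B m2"
    using m unfolding loc_basis2_def by blast
  have "sN (s ^ (t + 2 * n)) (q w) = sN (s ^ t) (q (sM (s ^ n) w))"
    using q unfolding quadratic_map_def by (simp add: power_add power_mult mult.commute)
  also have "\<dots> = sN (A ^ 2) (sN (s ^ t) (q m1)) + sN (A * B) (sN (s ^ t) (polar q m1 m2))
                   + sN (B ^ 2) (sN (s ^ t) (q m2))"
    unfolding nAB quadratic_map_expand[OF N q] by (simp add: N.scale_right_distrib mult.commute)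
  also have "loc_eq sN s \<dots> (sN (A ^ 2) (sN a z) + sN (A * B) (sN b z) + sN (B ^ 2) (sN c z))"
    by (intro N.loc_eq_add N.loc_eq_scale ea eb ec)
  also have "sN (A ^ 2) (sN a z) + sN (A * B) (sN b z) + sN (B ^ 2) (sN c z)
      = sN (A ^ 2 * a + A * B * b + B ^ 2 * c) z"
    by (simp add: N.scale_left_distrib)
  finally have "loc_eq sN s (sN (s ^ (t + 2 * n)) (q w)) (sN (A ^ 2 * a + A * B * b + B ^ 2 * c) z)" .
  moreover have "A ^ 2 * a + A * B * b + B ^ 2 * c \<in> ideal.span {a, b, c}"
    unfolding ideal_span_three_iff by blast
  ultimately show ?thesis by blast
qed

lemma kneser_primitive_imp_linear_form_primitive:
  assumes N: "module sN" and q: "quadratic_map sM sN q" and prim: "kneser_primitive sN q"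
  shows "linear_form_primitive sM sN q"
  unfolding linear_form_primitive_def
proof (intro allI impI, elim conjE)
  interpret N: module sN by fact
  fix s m1 m2 z a b c and t :: nat
  assume m: "loc_basis2 sM s m1 m2" and z: "loc_basis1 sN s z"
    and ea: "loc_eq sN s (sN (s ^ t) (q m1)) (sN a z)"
    and eb: "loc_eq sN s (sN (s ^ t) (polar q m1 m2)) (sN b z)"
    and ec: "loc_eq sN s (sN (s ^ t) (q m2)) (sN c z)"
  let ?T = "{y. \<exists>k. \<exists>e\<in>ideal.span {a, b, c}. loc_eq sN s (sN (s ^ k) y) (sN e z)}"
  have "range q \<subseteq> ?T"
    using quadratic_map_loc_value[OF N q m ea eb ec] by blast
  then have "N.span (range q) \<subseteq> ?T"
    by (rule N.span_minimal) (rule N.subspace_loc_multiples[OF ideal.subspace_span])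
  then obtain k e where e: "e \<in> ideal.span {a, b, c}" and "loc_eq sN s (sN (s ^ k) z) (sN e z)"
    using prim unfolding kneser_primitive_def by blast
  then obtain n where "s ^ n * s ^ k = s ^ n * e" using N.loc_basis1_cancel[OF z] by blast
  moreover have "s ^ n * e \<in> ideal.span {a, b, c}" by (rule ideal.span_scale[OF e])
  ultimately have "s ^ (n + k) \<in> ideal.span {a, b, c}" by (simp add: power_add)
  then show "\<exists>n u v w. s ^ n = u * a + v * b + w * c"
    unfolding ideal_span_three_iff by blast
qed

lemma linear_form_primitive_loc_generator:
  assumes N: "module sN" and prim: "linear_form_primitive sM sN q"
    and m: "loc_basis2 sM w m1 m2" and z: "loc_basis1 sN w z"
  shows "\<exists>n. sN (w ^ n) z \<in> module.span sN (range q)"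
proof -
  interpret N: module sN by fact
  obtain n1 a where a: "sN (w ^ n1) (q m1) = sN a z" using z unfolding loc_basis1_def by blast
  obtain n2 b where b: "sN (w ^ n2) (polar q m1 m2) = sN b z" using z unfolding loc_basis1_def by blast
  obtain n3 c where c: "sN (w ^ n3) (q m2) = sN c z" using z unfolding loc_basis1_def by blast
  define t where "t = n1 + n2 + n3" \<comment> \<open>a common exponent, as \<open>linear_form_primitive\<close> demands\<close>
  have ea: "sN (w ^ t) (q m1) = sN (w ^ (n2 + n3) * a) z"
    using arg_cong[OF a, of "sN (w ^ (n2 + n3))"] by (simp add: t_def power_add ac_simps)
  have eb: "sN (w ^ t) (polar q m1 m2) = sN (w ^ (n1 + n3) * b) z"
    using arg_cong[OF b, of "sN (w ^ (n1 + n3))"] by (simp add: t_def power_add ac_simps)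
  have ec: "sN (w ^ t) (q m2) = sN (w ^ (n1 + n2) * c) z"
    using arg_cong[OF c, of "sN (w ^ (n1 + n2))"] by (simp add: t_def power_add ac_simps)
  obtain n u v x where nuvx:
    "w ^ n = u * (w ^ (n2 + n3) * a) + v * (w ^ (n1 + n3) * b) + x * (w ^ (n1 + n2) * c)"
    using prim m z ea eb ec N.loc_eq_refl unfolding linear_form_primitive_def by metis
  have "sN (w ^ n) z = sN u (sN (w ^ t) (q m1)) + sN v (sN (w ^ t) (polar q m1 m2))
                       + sN x (sN (w ^ t) (q m2))"
    unfolding ea eb ec nuvx by (simp add: algebra_simps)
  also have "\<dots> \<in> N.span (range q)"
    by (intro N.span_add N.span_scale N.span_base N.polar_mem_span) auto
  finally show ?thesis by blast
qed

lemma linear_form_primitive_imp_kneser_primitive: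
  assumes "module sM" and N: "module sN"
    and "locally_free_rank2 sM" and "locally_free_rank1 sN"
    and prim: "linear_form_primitive sM sN q"
  shows "kneser_primitive sN q"
proof -
  interpret M: module sM by fact
  interpret N: module sN by fact
  obtain SM where SM: "ideal.span SM = UNIV" "\<forall>v\<in>SM. \<exists>m1 m2. loc_basis2 sM v m1 m2"
    using \<open>locally_free_rank2 sM\<close> unfolding locally_free_rank2_def by blast
  obtain SN where SN: "ideal.span SN = UNIV" "\<forall>u\<in>SN. \<exists>z. loc_basis1 sN u z"
    using \<open>locally_free_rank1 sN\<close> unfolding locally_free_rank1_def by blast
  have "y \<in> N.span (range q)" for y
  proof -
    let ?J = "{r. sN r y \<in> N.span (range q)}"
    have "\<exists>k. w ^ k \<in> ?J" if "w \<in> {u * v | u v. u \<in> SN \<and> v \<in> SM}" for w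
    proof -
      obtain u v m1 m2 z where w: "w = u * v"
        and m: "loc_basis2 sM v m1 m2" and z: "loc_basis1 sN u z"
        using \<open>w \<in> _\<close> SM(2) SN(2) by blast
      have "loc_basis2 sM w m1 m2" using M.loc_basis2_mult[OF m, of u] by (simp add: w mult.commute)
      moreover have z': "loc_basis1 sN w z" using N.loc_basis1_mult[OF z] by (simp add: w)
      ultimately obtain n where "sN (w ^ n) z \<in> N.span (range q)"
        using linear_form_primitive_loc_generator[OF N prim] by blast
      then show ?thesis using N.loc_basis1_power_scale_mem[OF z' N.subspace_span] by simp
    qed
    then have "1 \<in> ?J"
      by (intro one_mem_ideal_if_powers_of_generators[OF N.ideal_subspace_conductor
            ideal_span_products_eq_UNIV[OF SN(1) SM(1)]]) auto
    then show ?thesis by simp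
  qed
  then show ?thesis unfolding kneser_primitive_def by blast
qed

theorem proposition6p2:
  fixes sM :: "'r::comm_ring_1 \<Rightarrow> 'm::ab_group_add \<Rightarrow> 'm"
    and sN :: "'r \<Rightarrow> 'n::ab_group_add \<Rightarrow> 'n"
    and q :: "'m \<Rightarrow> 'n"
  assumes "module sM" and "module sN"
    and "locally_free_rank2 sM" and "locally_free_rank1 sN"
    and "quadratic_map sM sN q"
  shows "kneser_primitive sN q \<longleftrightarrow> linear_form_primitive sM sN q"
  using kneser_primitive_imp_linear_form_primitive[OF assms(2,5)]
    linear_form_primitive_imp_kneser_primitive[OF assms(1-4)] by blast

end
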